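(* Let $N\ge3$ be odd, $n\ge1$, $\tilde J>0$, $J_i=\tilde J/N^i$ for $1\le i\le n$, and let $0\le m\le n-1$ and $1\le s\le N$ be integers. Write $H_i=\mathcal H(h^{(m,s)};\gamma_i)$. If $s$ is odd, then $$H_{\lfloor sN^m/2\rfloor}=H_{\lfloor sN^m/2\rfloor+1}=\max_{1\le i\le sN^m}H_i=\max_{1\le i\le N^n}H_i,$$ and $H_i<H_{\lfloor sN^m/2\rfloor}$ for all $0\le i<\lfloor sN^m/2\rfloor$. If $s$ is even, then $$H_{\lfloor(s-1)N^m/2\rfloor+1}=\max_{1\le i\le sN^m}H_i=\max_{1\le i\le N^n}H_i,$$ and $H_i<H_{\lfloor(s-1)N^m/2\rfloor+1}$ for all $0\le i<\lfloor(s-1)N^m/2\rfloor+1$.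
   Context: Hierarchical lattice $\Lambda_N^n=\{1,\dots,N^n\}$; $k$-blocks are $\{jN^k+1,\dots,(j+1)N^k\}$; $d(a,b)$ is the smallest $k\ge0$ with $a,b$ in a common $k$-block. For a field $h$, $\mathcal H(h;\sigma)=-\frac12\sum_{\{v,w\},v\ne w}J_{d(v,w)}\sigma(v)\sigma(w)-\frac h2\sum_v\sigma(v)$ (unordered pairs). $\gamma_k$ is the configuration with $+1$ exactly on $\{1,\dots,k\}$ ($0\le k\le N^n$). $h^{(m,s)}=\tilde J\big[(1-\frac1N)(n-m)-(s-1)\frac1N\big]$. *)

theory Defs
  imports Complex_Main
begin

text \<open>Hierarchical lattice {1..N^n}. Sites a, b lie in a common k-block
  {j N^k + 1, ..., (j+1) N^k} iff (a-1) div N^k = (b-1) div N^k.\<close>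

definition hdist :: "nat \<Rightarrow> nat \<Rightarrow> nat \<Rightarrow> nat" where
  "hdist N a b = (LEAST k. (a - 1) div N ^ k = (b - 1) div N ^ k)"

definition gamma :: "nat \<Rightarrow> nat \<Rightarrow> real" where
  "gamma k v = (if v \<le> k then 1 else -1)"

text \<open>Hamiltonian H(h; sigma), sum over unordered pairs {v,w}, v \<noteq> w, written as v < w.\<close>
definition hamil :: "nat \<Rightarrow> nat \<Rightarrow> (nat \<Rightarrow> real) \<Rightarrow> real \<Rightarrow> (nat \<Rightarrow> real) \<Rightarrow> real" where
  "hamil N n J h \<sigma> =
     - (1/2) * (\<Sum>v\<in>{1..N ^ n}. \<Sum>w\<in>{v<..N ^ n}. J (hdist N v w) * \<sigma> v * \<sigma> w)
     - h / 2 * (\<Sum>v\<in>{1..N ^ n}. \<sigma> v)"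

definition hfield :: "nat \<Rightarrow> nat \<Rightarrow> real \<Rightarrow> nat \<Rightarrow> nat \<Rightarrow> real" where
  "hfield N n Jt m s = Jt * ((1 - 1 / real N) * (real n - real m) - (real s - 1) / real N)"

end

theory Submission
  imports Defs
begin

text \<open>Raising k to k + 1 flips the spin at site k + 1 and changes the energy by
  n (N - 1) J~/N - (2 J~/N) ds(k) - h, where ds(k) is the base-N digit sum of k: the sites below
  k + 1 at hierarchical distance i are d_i N^(i-1) many, d_i being the i-th digit of k.
  For N = 2c + 1 and h = h^(m,s) the increment is (2 J~/N) (T - ds(k)) with T = c m + (s - 1)/2, so
  H_k is an increasing affine function of the excess sum E_T(k) = sum_(i<k) (T - ds(i)).
  Writing k = N q + d, E_T(k) interpolates between E_(T-c)(q) and E_(T-c)(q + 1) up to a term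
  depending on d alone, maximal at d = c.  Induction on m then shows that E_T is maximised at the
  number with base-N digits t, c, ..., c when s = 2t + 1 (there ds = T, so its successor is a
  maximiser as well), and at its successor when s = 2t + 2.\<close>

function digit_sum :: "nat \<Rightarrow> nat \<Rightarrow> nat" where
  "digit_sum N k = (if N < 2 \<or> k = 0 then 0 else k mod N + digit_sum N (k div N))"
  by auto
termination by (relation "measure snd") auto

declare digit_sum.simps[simp del]

lemma digit_sum_0 [simp]: "digit_sum N 0 = 0"
  by (simp add: digit_sum.simps)

lemma digit_sum_append:
  assumes "N \<ge> 2" "d < N"
  shows "digit_sum N (N * q + d) = d + digit_sum N q"
proof (cases "N * q + d = 0")
  case False
  have "(N * q + d) mod N = d" "(N * q + d) div N = q"
    using assms by auto
  with assms False show ?thesis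
    by (subst digit_sum.simps) auto
qed (use assms in auto)

lemma digit_sum_digit: "N \<ge> 2 \<Longrightarrow> d < N \<Longrightarrow> digit_sum N d = d"
  using digit_sum_append[of N d 0] by simp

definition excess_sum :: "nat \<Rightarrow> real \<Rightarrow> nat \<Rightarrow> real" where
  "excess_sum N T k = (\<Sum>i<k. T - real (digit_sum N i))"

lemma excess_sum_Suc: "excess_sum N T (Suc k) = excess_sum N T k + (T - real (digit_sum N k))"
  by (simp add: excess_sum_def)

lemma excess_sum_nonpos: "T \<le> 0 \<Longrightarrow> excess_sum N T k \<le> 0"
  unfolding excess_sum_def by (intro sum_nonpos) auto

lemma sum_lessThan_add: "(\<Sum>i<m + (n::nat). f i) = (\<Sum>i<m. f i) + (\<Sum>i<n. f (m + i))"
  by (induction n) (auto simp: add.assoc)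

lemma sum_lessThan_mult_add:
  "(\<Sum>i<N * (q::nat) + d. f i) = (\<Sum>j<q. \<Sum>e<N. f (N * j + e)) + (\<Sum>e<d. f (N * q + e))"
proof -
  have "(\<Sum>i<N * q. f i) = (\<Sum>j<q. \<Sum>e<N. f (N * j + e))"
  proof (induction q)
    case (Suc q)
    have "N * Suc q = N * q + N" by simp
    then show ?case using Suc by (simp only: sum_lessThan_add) simp
  qed simp
  then show ?thesis by (simp add: sum_lessThan_add)
qed

lemma sum_lessThan_minus_of_nat: "(\<Sum>e<d. X - real e) = real d * X - real d * (real d - 1) / 2"
  by (induction d) (auto simp: field_simps)

text \<open>Each complete block N j, ..., N j + N - 1 below N q adds the digits 0, ..., N - 1 to
  digit_sum j; their mean (N - 1)/2 lowers the level T.\<close>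
lemma excess_sum_append:
  assumes "N \<ge> 2" "d < N"
  shows "excess_sum N T (N * q + d) = real N * excess_sum N (T - (real N - 1) / 2) q
           + real d * (T - real (digit_sum N q)) - real d * (real d - 1) / 2"
proof -
  have block: "(\<Sum>e<N. T - real (digit_sum N (N * j + e)))
      = real N * (T - (real N - 1) / 2 - real (digit_sum N j))" for j
  proof -
    have "(\<Sum>e<N. T - real (digit_sum N (N * j + e))) = (\<Sum>e<N. (T - real (digit_sum N j)) - real e)"
      using assms by (intro sum.cong) (auto simp: digit_sum_append)
    also have "\<dots> = real N * (T - (real N - 1) / 2 - real (digit_sum N j))"
      by (subst sum_lessThan_minus_of_nat) (simp add: field_simps)
    finally show ?thesis .
  qed
  have last: "(\<Sum>e<d. T - real (digit_sum N (N * q + e))) = (\<Sum>e<d. (T - real (digit_sum N q)) - real e)"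
    using assms by (intro sum.cong) (auto simp: digit_sum_append)
  show ?thesis
    unfolding excess_sum_def sum_lessThan_mult_add block last sum_lessThan_minus_of_nat
    by (simp add: sum_distrib_left)
qed

lemma excess_sum_append_interpolate:
  assumes N: "N = 2 * c + 1" and "d < N"
  shows "excess_sum N T (N * q + d) = (real N - real d) * excess_sum N (T - real c) q
           + real d * excess_sum N (T - real c) (Suc q) + (real d * real c - real d * (real d - 1) / 2)"
proof (cases "c = 0")
  case False
  then have "N \<ge> 2" "(real N - 1) / 2 = real c" using N by auto
  then show ?thesis
    using excess_sum_append[of N d T q] assms by (simp add: excess_sum_Suc algebra_simps)
qed (use assms in simp)

lemma last_digit_gain_le: "real d * real c - real d * (real d - 1) / 2 \<le> real c * (real c + 1) / 2"
  and last_digit_gain_less: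
    "d < c \<Longrightarrow> real d * real c - real d * (real d - 1) / 2 < real c * (real c + 1) / 2"
proof -
  have gap: "real c * (real c + 1) / 2 - (real d * real c - real d * (real d - 1) / 2)
      = (real c - real d) * (real c - real d + 1) / 2"
    by (simp add: field_simps)
  have "0 \<le> (real c - real d) * (real c - real d + 1)"
    by (cases "d \<le> c") (auto intro: mult_nonneg_nonneg mult_nonpos_nonpos)
  then show "real d * real c - real d * (real d - 1) / 2 \<le> real c * (real c + 1) / 2"
    using gap by linarith
  assume "d < c"
  then have "0 < (real c - real d) * (real c - real d + 1)" by (intro mult_pos_pos) auto
  then show "real d * real c - real d * (real d - 1) / 2 < real c * (real c + 1) / 2"
    using gap by linarith
qed

lemma mult_add_decomp: "(N::nat) > 0 \<Longrightarrow> \<exists>q d. k = N * q + d \<and> d < N"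
  by (metis div_mult_mod_eq mod_less_divisor mult.commute)

lemma less_mult_add_cases:
  fixes N q d a c :: nat
  assumes "N * q + d < N * a + c" "c < N"
  shows "q < a \<or> q = a \<and> d < c"
proof (rule ccontr)
  assume "\<not> (q < a \<or> q = a \<and> d < c)"
  then consider "a < q" | "q = a" "c \<le> d" by linarith
  then have "N * a + c \<le> N * q + d"
  proof cases
    case 1
    then have "N * (a + 1) \<le> N * q" by (intro mult_le_mono2) simp
    then show ?thesis using assms(2) by simp
  qed simp
  with assms(1) show False by simp
qed

lemma excess_sum_max_low_digit:
  assumes N: "N = 2 * c + 1" "c \<ge> 1" and T: "T \<le> real c" and p: "p < N"
    and le: "\<And>d. real d * T - real d * (real d - 1) / 2 \<le> real p * T - real p * (real p - 1) / 2"
    and less: "\<And>d. d < p \<Longrightarrow> real d * T - real d * (real d - 1) / 2 < real p * T - real p * (real p - 1) / 2"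
  shows "excess_sum N T k \<le> excess_sum N T p"
    and "k < p \<Longrightarrow> excess_sum N T k < excess_sum N T p"
proof -
  have N2: "N \<ge> 2" and c: "(real N - 1) / 2 = real c" using N by auto
  have low: "excess_sum N T d = real d * T - real d * (real d - 1) / 2" if "d < N" for d
    using excess_sum_append[OF N2 that, of T 0] by (simp add: excess_sum_def)
  obtain q d where k: "k = N * q + d" "d < N" using mult_add_decomp[of N k] N2 by auto
  have "excess_sum N (T - real c) q \<le> 0" using T by (intro excess_sum_nonpos) simp
  then have "real N * excess_sum N (T - real c) q \<le> 0" by (simp add: mult_nonneg_nonpos)
  moreover have "real d * (T - real (digit_sum N q)) \<le> real d * T" by (simp add: algebra_simps)
  ultimately have "real N * excess_sum N (T - real c) q + real d * (T - real (digit_sum N q)) \<le> real d * T"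
    by linarith
  then show "excess_sum N T k \<le> excess_sum N T p"
    using excess_sum_append[OF N2 k(2), of T q] c k(1) low[OF p] le[of d] by simp
  assume "k < p"
  then show "excess_sum N T k < excess_sum N T p"
    using low[of k] low[OF p] p less[of k] by simp
qed

lemma excess_sum_max_odd_step:
  assumes N: "N = 2 * c + 1" "c \<ge> 1"
    and le: "\<And>k. excess_sum N T k \<le> excess_sum N T a"
    and less: "\<And>k. k < a \<Longrightarrow> excess_sum N T k < excess_sum N T a"
    and digits: "real (digit_sum N a) = T"
  shows "excess_sum N (T + c) k \<le> excess_sum N (T + c) (N * a + c)"
    and "k < N * a + c \<Longrightarrow> excess_sum N (T + c) k < excess_sum N (T + c) (N * a + c)"
    and "real (digit_sum N (N * a + c)) = T + c"
proof -
  have N2: "N \<ge> 2" and cN: "c < N" using N by auto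
  let ?G = "excess_sum N T a"
  have flat: "excess_sum N T (Suc a) = ?G" using digits by (simp add: excess_sum_Suc)
  have top: "excess_sum N (T + c) (N * a + c) = real N * ?G + real c * (real c + 1) / 2"
    using excess_sum_append_interpolate[OF N(1) cN, of "T + c" a] flat by (simp add: field_simps)
  obtain q d where k: "k = N * q + d" "d < N" using mult_add_decomp[of N k] N2 by auto
  have at_k: "excess_sum N (T + c) k = (real N - real d) * excess_sum N T q
      + real d * excess_sum N T (Suc q) + (real d * real c - real d * (real d - 1) / 2)"
    using excess_sum_append_interpolate[OF N(1) k(2), of "T + c" q] k(1) by simp
  have Nd: "real N - real d > 0" using k by simp
  have left: "(real N - real d) * excess_sum N T q \<le> (real N - real d) * ?G"
    using le[of q] Nd by (intro mult_left_mono) auto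
  have right: "real d * excess_sum N T (Suc q) \<le> real d * ?G"
    using le[of "Suc q"] by (intro mult_left_mono) auto
  have split: "(real N - real d) * ?G + real d * ?G = real N * ?G" by (simp add: algebra_simps)
  show "excess_sum N (T + c) k \<le> excess_sum N (T + c) (N * a + c)"
    using at_k top left right last_digit_gain_le[of d c] split by linarith
  show "real (digit_sum N (N * a + c)) = T + c"
    using digit_sum_append[OF N2 cN, of a] digits by simp
  assume "k < N * a + c"
  then consider "q < a" | "q = a" "d < c" using less_mult_add_cases k cN by blast
  then show "excess_sum N (T + c) k < excess_sum N (T + c) (N * a + c)"
  proof cases
    case 1
    then have "(real N - real d) * excess_sum N T q < (real N - real d) * ?G"
      using less Nd by (intro mult_strict_left_mono) auto
    then show ?thesis using at_k top right last_digit_gain_le[of d c] split by linarith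
  next
    case 2
    then show ?thesis using at_k top flat last_digit_gain_less[of d c] split by simp
  qed
qed

text \<open>A half-integer level T forces the steps of the excess sum to have size at least 1/2;
  this is what replaces the flat top of the integer case.\<close>
lemma interpolation_le_half_gap:
  fixes u v G :: real
  assumes N: "N = 2 * c + 1" and d: "d < N" and u: "u \<le> G" and v: "v \<le> G"
    and gap: "1 / 2 \<le> \<bar>v - u\<bar>"
  defines "L \<equiv> (real N - real d) * u + real d * v + (real d * real c - real d * (real d - 1) / 2)"
  shows "L \<le> real N * G + real c ^ 2 / 2"
    and "u < G \<Longrightarrow> v < G \<Longrightarrow> L < real N * G + real c ^ 2 / 2"
proof -
  have rN: "real N = 2 * real c + 1" using N by simp
  have "L \<le> real N * v + real c ^ 2 / 2 \<or> L \<le> real N * u + real c ^ 2 / 2"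
  proof (cases "v - u \<ge> 1 / 2")
    case True
    have "(real N - real d) * (1 / 2) \<le> (real N - real d) * (v - u)"
      using True d by (intro mult_left_mono) auto
    moreover have "L = real N * v - (real N - real d) * (v - u) + real c ^ 2 / 2
        - (real c - real d + 1) ^ 2 / 2 + (real N - real d) / 2"
      unfolding L_def rN by (simp add: field_simps power2_eq_square)
    moreover have "(real c - real d + 1) ^ 2 \<ge> 0" by simp
    ultimately show ?thesis by linarith
  next
    case False
    then have "v - u \<le> - 1 / 2" using gap by linarith
    then have "real d * (v - u) \<le> real d * (- 1 / 2)" by (intro mult_left_mono) auto
    moreover have "L = real N * u + real d * (v - u) + real c ^ 2 / 2
        - (real c - real d) ^ 2 / 2 + real d / 2"
      unfolding L_def rN by (simp add: field_simps power2_eq_square)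
    moreover have "(real c - real d) ^ 2 \<ge> 0" by simp
    ultimately show ?thesis by linarith
  qed
  moreover have "real N * u \<le> real N * G" "real N * v \<le> real N * G"
    using u v by (simp_all add: mult_left_mono)
  ultimately show "L \<le> real N * G + real c ^ 2 / 2" by linarith
  assume "u < G" "v < G"
  then have "real N * u < real N * G" "real N * v < real N * G" using rN by simp_all
  with \<open>L \<le> real N * v + real c ^ 2 / 2 \<or> L \<le> real N * u + real c ^ 2 / 2\<close>
  show "L < real N * G + real c ^ 2 / 2" by linarith
qed

lemma excess_sum_max_even_step:
  assumes N: "N = 2 * c + 1" "c \<ge> 1"
    and le: "\<And>k. excess_sum N T k \<le> excess_sum N T (Suc b)"
    and less: "\<And>k. k < Suc b \<Longrightarrow> excess_sum N T k < excess_sum N T (Suc b)"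
    and digits: "real (digit_sum N b) = T - 1 / 2"
    and half: "T = real j + 1 / 2"
  shows "excess_sum N (T + c) k \<le> excess_sum N (T + c) (Suc (N * b + c))"
    and "k < Suc (N * b + c) \<Longrightarrow> excess_sum N (T + c) k < excess_sum N (T + c) (Suc (N * b + c))"
    and "real (digit_sum N (N * b + c)) = T + c - 1 / 2"
proof -
  have N2: "N \<ge> 2" and cN: "c < N" "Suc c < N" and rN: "real N = 2 * real c + 1" using N by auto
  let ?G = "excess_sum N T (Suc b)"
  let ?gain = "\<lambda>d::nat. real d * real c - real d * (real d - 1) / 2"
  have below: "excess_sum N T b = ?G - 1 / 2" using digits by (simp add: excess_sum_Suc)
  have "excess_sum N (T + c) (N * b + Suc c)
      = (real N - real (Suc c)) * (?G - 1 / 2) + real (Suc c) * ?G + ?gain (Suc c)"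
    using excess_sum_append_interpolate[OF N(1) cN(2), of "T + c" b] below by simp
  then have top: "excess_sum N (T + c) (Suc (N * b + c)) = real N * ?G + real c ^ 2 / 2"
    by (simp add: rN field_simps power2_eq_square)
  show "real (digit_sum N (N * b + c)) = T + c - 1 / 2"
    using digit_sum_append[OF N2 cN(1), of b] digits by simp
  obtain q d where k: "k = N * q + d" "d < N" using mult_add_decomp[of N k] N2 by auto
  let ?u = "excess_sum N T q" and ?v = "excess_sum N T (Suc q)"
  have at_k: "excess_sum N (T + c) k = (real N - real d) * ?u + real d * ?v + ?gain d"
    using excess_sum_append_interpolate[OF N(1) k(2), of "T + c" q] k(1) by simp
  have "\<bar>?v - ?u\<bar> = \<bar>real j + 1 / 2 - real (digit_sum N q)\<bar>"
    by (simp add: excess_sum_Suc half)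
  also have "\<dots> \<ge> 1 / 2" by (cases "digit_sum N q \<le> j") auto
  finally have gap: "1 / 2 \<le> \<bar>?v - ?u\<bar>" .
  note bound = interpolation_le_half_gap[OF N(1) k(2) le le gap]
  show "excess_sum N (T + c) k \<le> excess_sum N (T + c) (Suc (N * b + c))"
    using bound(1) at_k top by simp
  assume "k < Suc (N * b + c)"
  then consider "q < b" | "q = b" "d \<le> c" using less_mult_add_cases[of N q d b "Suc c"] k cN by auto
  then show "excess_sum N (T + c) k < excess_sum N (T + c) (Suc (N * b + c))"
  proof cases
    case 1
    then show ?thesis using bound(2) less at_k top by simp
  next
    case 2
    then have "excess_sum N (T + c) k = real N * ?G + real c ^ 2 / 2 - (real c - real d + 1) ^ 2 / 2"
      using at_k below by (simp add: rN field_simps power2_eq_square)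
    moreover have "(real c - real d + 1) ^ 2 > 0" using 2 by simp
    ultimately show ?thesis using top by simp
  qed
qed

fun mid_index :: "nat \<Rightarrow> nat \<Rightarrow> nat \<Rightarrow> nat \<Rightarrow> nat" where
  "mid_index N c t 0 = t"
| "mid_index N c t (Suc m) = N * mid_index N c t m + c"

lemma mid_index_closed_form: "N = 2 * c + 1 \<Longrightarrow> 2 * mid_index N c t m + 1 = (2 * t + 1) * N ^ m"
proof (induction m)
  case (Suc m)
  have "2 * mid_index N c t (Suc m) + 1 = N * (2 * mid_index N c t m) + (2 * c + 1)"
    by simp
  also have "\<dots> = N * (2 * mid_index N c t m + 1)"
    unfolding Suc.prems[symmetric] by (simp add: algebra_simps)
  also have "\<dots> = (2 * t + 1) * N ^ Suc m"
    using Suc by (simp add: algebra_simps)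
  finally show ?case .
qed simp

lemma excess_sum_max_odd:
  fixes m :: nat
  assumes N: "N = 2 * c + 1" "c \<ge> 1" and t: "t \<le> c"
  defines "T \<equiv> real c * real m + real t" and "a \<equiv> mid_index N c t m"
  shows "(\<forall>k. excess_sum N T k \<le> excess_sum N T a)
    \<and> (\<forall>k<a. excess_sum N T k < excess_sum N T a) \<and> real (digit_sum N a) = T"
  unfolding T_def a_def
proof (induction m)
  case 0
  have peak: "real t * real t - real t * (real t - 1) / 2 = real t * (real t + 1) / 2"
    by (simp add: field_simps)
  have le: "real d * real t - real d * (real d - 1) / 2 \<le> real t * real t - real t * (real t - 1) / 2"
    for d :: nat
    unfolding peak by (rule last_digit_gain_le)
  have less: "real d * real t - real d * (real d - 1) / 2 < real t * real t - real t * (real t - 1) / 2"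
    if "d < t" for d
    unfolding peak using that by (rule last_digit_gain_less)
  have low: "real t \<le> real c" "t < N" using t N by auto
  have "excess_sum N (real t) k \<le> excess_sum N (real t) t"
    "k < t \<Longrightarrow> excess_sum N (real t) k < excess_sum N (real t) t" for k
    using excess_sum_max_low_digit[OF N low le less] by blast+
  then show ?case using digit_sum_digit[of N t] N low by auto
next
  case (Suc m)
  have shift: "real c * real (Suc m) + real t = (real c * real m + real t) + real c"
    by (simp add: algebra_simps)
  show ?case unfolding shift mid_index.simps
    using excess_sum_max_odd_step[OF N, of "real c * real m + real t" "mid_index N c t m"] Suc by auto
qed

lemma excess_sum_max_even:
  fixes m :: nat
  assumes N: "N = 2 * c + 1" "c \<ge> 1" and t: "t + 1 \<le> c"
  defines "T \<equiv> real c * real m + real t + 1 / 2" and "a \<equiv> mid_index N c t m"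
  shows "(\<forall>k. excess_sum N T k \<le> excess_sum N T (Suc a))
    \<and> (\<forall>k<Suc a. excess_sum N T k < excess_sum N T (Suc a)) \<and> real (digit_sum N a) = T - 1 / 2"
  unfolding T_def a_def
proof (induction m)
  case 0
  have gain: "real d * (real t + 1 / 2) - real d * (real d - 1) / 2
      = (real t + 1) ^ 2 / 2 - (real t + 1 - real d) ^ 2 / 2" for d :: nat
    by (simp add: field_simps power2_eq_square)
  have peak: "real (Suc t) * (real t + 1 / 2) - real (Suc t) * (real (Suc t) - 1) / 2 = (real t + 1) ^ 2 / 2"
    using gain[of "Suc t"] by simp
  have le: "real d * (real t + 1 / 2) - real d * (real d - 1) / 2
      \<le> real (Suc t) * (real t + 1 / 2) - real (Suc t) * (real (Suc t) - 1) / 2" for d :: nat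
    using gain[of d] peak zero_le_power2[of "real t + 1 - real d"] by linarith
  have less: "real d * (real t + 1 / 2) - real d * (real d - 1) / 2
      < real (Suc t) * (real t + 1 / 2) - real (Suc t) * (real (Suc t) - 1) / 2" if "d < Suc t" for d
  proof -
    have "(real t + 1 - real d) ^ 2 > 0" using that by simp
    then show ?thesis using gain[of d] peak by linarith
  qed
  have low: "real t + 1 / 2 \<le> real c" "Suc t < N" using t N by auto
  have "excess_sum N (real t + 1 / 2) k \<le> excess_sum N (real t + 1 / 2) (Suc t)"
    "k < Suc t \<Longrightarrow> excess_sum N (real t + 1 / 2) k < excess_sum N (real t + 1 / 2) (Suc t)" for k
    using excess_sum_max_low_digit[OF N low le less] by blast+
  then show ?case using digit_sum_digit[of N t] N t by auto
next
  case (Suc m)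
  let ?T = "real c * real m + real t + 1 / 2"
  have shift: "real c * real (Suc m) + real t + 1 / 2 = ?T + real c" by (simp add: algebra_simps)
  have half: "?T = real (c * m + t) + 1 / 2" by simp
  from Suc have le: "\<And>k. excess_sum N ?T k \<le> excess_sum N ?T (Suc (mid_index N c t m))"
    and less: "\<And>k. k < Suc (mid_index N c t m) \<Longrightarrow> excess_sum N ?T k < excess_sum N ?T (Suc (mid_index N c t m))"
    and digits: "real (digit_sum N (mid_index N c t m)) = ?T - 1 / 2"
    by auto
  show ?case unfolding shift mid_index.simps
    using excess_sum_max_even_step[OF N le less digits half] by blast
qed

definition block_dist :: "nat \<Rightarrow> nat \<Rightarrow> nat \<Rightarrow> nat" where
  "block_dist N a b = (LEAST j. a div N ^ j = b div N ^ j)"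

lemma hdist_Suc_Suc: "hdist N (Suc a) (Suc b) = block_dist N a b"
  by (simp add: hdist_def block_dist_def)

lemma block_dist_commute: "block_dist N a b = block_dist N b a"
  unfolding block_dist_def by (simp add: eq_commute)

lemma common_block_exists:
  fixes a b N :: nat
  assumes "N \<ge> 2"
  shows "\<exists>j. a div N ^ j = b div N ^ j"
proof -
  have "a + b < 2 ^ (a + b)" by (rule less_exp)
  also have "(2::nat) ^ (a + b) \<le> N ^ (a + b)" using assms by (intro power_mono) auto
  finally show ?thesis by (intro exI[of _ "a + b"]) simp
qed

lemma block_dist_le: "a < N ^ n \<Longrightarrow> b < N ^ n \<Longrightarrow> block_dist N a b \<le> n"
  unfolding block_dist_def by (rule Least_le) simp

lemma block_dist_pos:
  assumes "N \<ge> 2" "a \<noteq> b"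
  shows "block_dist N a b \<ge> 1"
proof (rule ccontr)
  assume "\<not> block_dist N a b \<ge> 1"
  then have "block_dist N a b = 0" by simp
  moreover have "a div N ^ block_dist N a b = b div N ^ block_dist N a b"
    unfolding block_dist_def by (rule LeastI_ex[OF common_block_exists[OF assms(1)]])
  ultimately show False using assms by simp
qed

lemma mult_add_eq_iff:
  fixes N a b d e :: nat
  assumes "e < N" "d < N"
  shows "N * a + e = N * b + d \<longleftrightarrow> a = b \<and> e = d"
proof
  assume eq: "N * a + e = N * b + d"
  have "(N * a + e) div N = a" "(N * a + e) mod N = e" "(N * b + d) div N = b" "(N * b + d) mod N = d"
    using assms by auto
  then show "a = b \<and> e = d" unfolding eq by simp
qed simp

lemma block_dist_append_distinct:
  assumes N: "N \<ge> 2" and "e < N" "d < N" "a \<noteq> b"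
  shows "block_dist N (N * a + e) (N * b + d) = Suc (block_dist N a b)"
proof -
  have shift: "(N * a + e) div N ^ Suc j = (N * b + d) div N ^ Suc j \<longleftrightarrow> a div N ^ j = b div N ^ j" for j
    using assms by (simp add: div_mult2_eq)
  obtain i where i: "(N * a + e) div N ^ i = (N * b + d) div N ^ i"
    using common_block_exists[OF N] by blast
  obtain j where j: "a div N ^ j = b div N ^ j"
    using common_block_exists[OF N] by blast
  have "\<not> (N * a + e) div N ^ 0 = (N * b + d) div N ^ 0"
    using assms by (simp add: mult_add_eq_iff)
  then show ?thesis
    unfolding block_dist_def by (rule Least_Suc2[OF i j _ allI[OF shift]])
qed

lemma block_dist_append_same:
  assumes "e < N" "d < N" "e \<noteq> d"
  shows "block_dist N (N * q + e) (N * q + d) = 1"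
  unfolding block_dist_def
proof (rule Least_equality)
  show "(N * q + e) div N ^ 1 = (N * q + d) div N ^ 1" using assms by simp
next
  fix j assume "(N * q + e) div N ^ j = (N * q + d) div N ^ j"
  then show "1 \<le> j" using assms by (cases j) auto
qed

definition coupling :: "nat \<Rightarrow> real \<Rightarrow> nat \<Rightarrow> nat \<Rightarrow> real" where
  "coupling N Jt a b = (if a = b then 0 else Jt / real N ^ block_dist N a b)"

lemma sum_coupling_block:
  assumes N: "N \<ge> 2" and d: "d < N" and "a \<noteq> b"
  shows "(\<Sum>e<N. coupling N Jt (N * a + e) (N * b + d)) = coupling N Jt a b"
proof -
  have "coupling N Jt (N * a + e) (N * b + d) = coupling N Jt a b / real N" if "e < N" for e
  proof -
    have "N * a + e \<noteq> N * b + d"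
      using assms that by (simp add: mult_add_eq_iff)
    then show ?thesis
      using assms block_dist_append_distinct[OF N that d] by (simp add: coupling_def)
  qed
  then show ?thesis using N by simp
qed

lemma sum_coupling_own_block:
  assumes N: "N \<ge> 2" and d: "d < N"
  shows "(\<Sum>e<N. coupling N Jt (N * q + e) (N * q + d)) = (real N - 1) * Jt / real N"
proof -
  have "(\<Sum>e<N. coupling N Jt (N * q + e) (N * q + d)) = (\<Sum>e<N. Jt / real N - (if e = d then Jt / real N else 0))"
    using block_dist_append_same[of _ N d q] d by (intro sum.cong) (auto simp: coupling_def)
  also have "\<dots> = real N * (Jt / real N) - Jt / real N" using d by (simp add: sum_subtractf)
  finally show ?thesis using N by (simp add: field_simps)
qed

lemma sum_coupling_below:
  assumes N: "N \<ge> 2"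
  shows "(\<Sum>a<x. coupling N Jt a x) = Jt / real N * real (digit_sum N x)"
proof (induction x rule: less_induct)
  case (less x)
  show ?case
  proof (cases "x = 0")
    case False
    define q d where "q = x div N" and "d = x mod N"
    then have x: "x = N * q + d" "d < N" using N by auto
    have "q < x" unfolding q_def using False N by simp
    have "(\<Sum>a<x. coupling N Jt a x)
        = (\<Sum>j<q. \<Sum>e<N. coupling N Jt (N * j + e) (N * q + d)) + (\<Sum>e<d. coupling N Jt (N * q + e) (N * q + d))"
      unfolding x(1) by (rule sum_lessThan_mult_add)
    also have "(\<Sum>j<q. \<Sum>e<N. coupling N Jt (N * j + e) (N * q + d)) = (\<Sum>j<q. coupling N Jt j q)"
      using sum_coupling_block[OF N x(2)] by (intro sum.cong) auto
    also have "(\<Sum>e<d. coupling N Jt (N * q + e) (N * q + d)) = (\<Sum>e<d. Jt / real N)"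
      using block_dist_append_same[of _ N d q] x(2) by (intro sum.cong) (auto simp: coupling_def)
    finally show ?thesis
      using less[OF \<open>q < x\<close>] digit_sum_append[OF N x(2), of q] x(1) by (simp add: distrib_left)
  qed simp
qed

lemma sum_coupling_total:
  assumes N: "N \<ge> 2"
  shows "x < N ^ n \<Longrightarrow> (\<Sum>a<N ^ n. coupling N Jt a x) = real n * (real N - 1) * Jt / real N"
proof (induction n arbitrary: x)
  case 0
  then show ?case by (simp add: coupling_def)
next
  case (Suc n)
  obtain q d where x: "x = N * q + d" "d < N" using mult_add_decomp[of N x] N by auto
  have "N * q < N * N ^ n" using Suc.prems unfolding x(1) power_Suc by linarith
  then have q: "q < N ^ n" by simp
  have "(\<Sum>a<N ^ Suc n. coupling N Jt a x) = (\<Sum>j<N ^ n. \<Sum>e<N. coupling N Jt (N * j + e) (N * q + d))"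
    using sum_lessThan_mult_add[where N=N and q="N ^ n" and d=0 and f="\<lambda>a. coupling N Jt a x"] x(1) by simp
  also have "\<dots> = (\<Sum>j<N ^ n. coupling N Jt j q + (if j = q then (real N - 1) * Jt / real N else 0))"
    using sum_coupling_block[OF N x(2)] sum_coupling_own_block[OF N x(2)]
    by (intro sum.cong) (auto simp: coupling_def)
  also have "\<dots> = real n * (real N - 1) * Jt / real N + (real N - 1) * Jt / real N"
    using Suc.IH[OF q] q by (simp add: sum.distrib)
  also have "\<dots> = real (Suc n) * (real N - 1) * Jt / real N"
    by (simp only: of_nat_Suc distrib_right mult_1_left add_divide_distrib)
  finally show ?case .
qed

lemma pair_sum_gamma_Suc_diff:
  fixes F :: "nat \<Rightarrow> nat \<Rightarrow> real"
  assumes kL: "Suc k \<le> L"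
  shows "(\<Sum>v\<in>{1..L}. \<Sum>w\<in>{v<..L}. F v w * gamma (Suc k) v * gamma (Suc k) w)
       - (\<Sum>v\<in>{1..L}. \<Sum>w\<in>{v<..L}. F v w * gamma k v * gamma k w)
       = 2 * (\<Sum>v\<in>{1..k}. F v (Suc k)) - 2 * (\<Sum>w\<in>{Suc k<..L}. F (Suc k) w)"
proof -
  have "(\<Sum>v\<in>{1..L}. \<Sum>w\<in>{v<..L}. F v w * gamma (Suc k) v * gamma (Suc k) w)
       - (\<Sum>v\<in>{1..L}. \<Sum>w\<in>{v<..L}. F v w * gamma k v * gamma k w)
     = (\<Sum>v\<in>{1..L}. \<Sum>w\<in>{v<..L}. (if w = Suc k then 2 * F v w else 0) - (if v = Suc k then 2 * F v w else 0))"
    unfolding sum_subtractf[symmetric]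
  proof (intro sum.cong refl)
    fix v w assume "w \<in> {v<..L}"
    then show "F v w * gamma (Suc k) v * gamma (Suc k) w - F v w * gamma k v * gamma k w
        = (if w = Suc k then 2 * F v w else 0) - (if v = Suc k then 2 * F v w else 0)"
      by (auto simp: gamma_def)
  qed
  also have "\<dots> = (\<Sum>v\<in>{1..L}. if v < Suc k then 2 * F v (Suc k) else 0)
      - (\<Sum>v\<in>{1..L}. if v = Suc k then 2 * (\<Sum>w\<in>{v<..L}. F v w) else 0)"
  proof -
    have "(\<Sum>w\<in>{v<..L}. (if w = Suc k then 2 * F v w else 0) - (if v = Suc k then 2 * F v w else 0))
      = (if v < Suc k then 2 * F v (Suc k) else 0) - (if v = Suc k then 2 * (\<Sum>w\<in>{v<..L}. F v w) else 0)"
      for v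
      using kL by (cases "v = Suc k") (simp_all add: sum_subtractf sum_distrib_left sum_negf)
    then show ?thesis by (simp add: sum_subtractf)
  qed
  also have "(\<Sum>v\<in>{1..L}. if v < Suc k then 2 * F v (Suc k) else 0) = 2 * (\<Sum>v\<in>{1..k}. F v (Suc k))"
  proof -
    have "{v\<in>{1..L}. v < Suc k} = {1..k}" using kL by auto
    then show ?thesis by (simp add: sum.inter_filter[symmetric] sum_distrib_left)
  qed
  finally show ?thesis using kL by simp
qed

lemma sum_gamma_Suc_diff:
  assumes "Suc k \<le> L"
  shows "(\<Sum>v\<in>{1..L}. gamma (Suc k) v) - (\<Sum>v\<in>{1..L}. gamma k v) = 2"
proof -
  have "(\<Sum>v\<in>{1..L}. gamma (Suc k) v) - (\<Sum>v\<in>{1..L}. gamma k v) = (\<Sum>v\<in>{1..L}. if v = Suc k then 2 else 0)"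
    unfolding sum_subtractf[symmetric] by (intro sum.cong) (auto simp: gamma_def)
  then show ?thesis using assms by simp
qed

lemma hamil_gamma_Suc_diff:
  assumes "Suc k \<le> N ^ n"
  shows "hamil N n J h (gamma (Suc k)) - hamil N n J h (gamma k)
     = - (\<Sum>v\<in>{1..k}. J (hdist N v (Suc k))) + (\<Sum>w\<in>{Suc k<..N ^ n}. J (hdist N (Suc k) w)) - h"
  using pair_sum_gamma_Suc_diff[OF assms, of "\<lambda>v w. J (hdist N v w)"] sum_gamma_Suc_diff[OF assms]
  unfolding hamil_def by (simp add: algebra_simps)

lemma J_block_dist_eq_coupling:
  assumes "N \<ge> 2" and J: "\<forall>i\<in>{1..n}. J i = Jt / real N ^ i"
    and "a < N ^ n" "b < N ^ n" "a \<noteq> b"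
  shows "J (block_dist N a b) = coupling N Jt a b"
  using assms block_dist_pos[of N a b] block_dist_le[of a N n b] by (simp add: coupling_def)

lemma sum_J_below:
  assumes "N \<ge> 2" and J: "\<forall>i\<in>{1..n}. J i = Jt / real N ^ i" and k: "k < N ^ n"
  shows "(\<Sum>v\<in>{1..k}. J (hdist N v (Suc k))) = (\<Sum>a<k. coupling N Jt a k)"
proof -
  have "(\<Sum>v\<in>{1..k}. J (hdist N v (Suc k))) = (\<Sum>a<k. J (hdist N (Suc a) (Suc k)))"
    by (simp add: sum.atLeast1_atMost_eq)
  also have "\<dots> = (\<Sum>a<k. coupling N Jt a k)"
    using J_block_dist_eq_coupling[OF assms(1) J _ k] k by (intro sum.cong) (auto simp: hdist_Suc_Suc)
  finally show ?thesis .
qed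

lemma sum_J_above:
  assumes "N \<ge> 2" and J: "\<forall>i\<in>{1..n}. J i = Jt / real N ^ i" and k: "k < N ^ n"
  shows "(\<Sum>w\<in>{Suc k<..N ^ n}. J (hdist N (Suc k) w)) = (\<Sum>b\<in>{k<..<N ^ n}. coupling N Jt b k)"
proof -
  have "{Suc k<..N ^ n} = Suc ` {k<..<N ^ n}"
    by (simp add: atLeastSucAtMost_greaterThanAtMost[symmetric] atLeastSucLessThan_greaterThanLessThan[symmetric]
        atLeastLessThanSuc_atLeastAtMost)
  then have "(\<Sum>w\<in>{Suc k<..N ^ n}. J (hdist N (Suc k) w)) = (\<Sum>b\<in>{k<..<N ^ n}. J (hdist N (Suc k) (Suc b)))"
    by (simp add: sum.reindex)
  also have "\<dots> = (\<Sum>b\<in>{k<..<N ^ n}. coupling N Jt b k)"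
    using J_block_dist_eq_coupling[OF assms(1) J _ k]
    by (intro sum.cong) (auto simp: hdist_Suc_Suc block_dist_commute)
  finally show ?thesis .
qed

lemma sum_lessThan_split_at:
  fixes f :: "nat \<Rightarrow> 'a::comm_monoid_add"
  assumes "f k = 0" "k < L"
  shows "(\<Sum>b<L. f b) = (\<Sum>b<k. f b) + (\<Sum>b\<in>{k<..<L}. f b)"
proof -
  have "{..<L} = {..<k} \<union> {k} \<union> {k<..<L}" using assms(2) by auto
  moreover have "sum f ({..<k} \<union> {k<..<L}) = sum f {..<k} + sum f {k<..<L}"
    by (rule sum.union_disjoint) auto
  ultimately show ?thesis using assms(1) by simp
qed

lemma hamil_gamma_Suc:
  assumes N: "N \<ge> 2" and J: "\<forall>i\<in>{1..n}. J i = Jt / real N ^ i" and k: "k < N ^ n"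
  shows "hamil N n J h (gamma (Suc k)) - hamil N n J h (gamma k)
      = real n * (real N - 1) * Jt / real N - 2 * Jt / real N * real (digit_sum N k) - h"
proof -
  have "(\<Sum>b<N ^ n. coupling N Jt b k) = (\<Sum>b<k. coupling N Jt b k) + (\<Sum>b\<in>{k<..<N ^ n}. coupling N Jt b k)"
    by (rule sum_lessThan_split_at) (auto simp: coupling_def k)
  then show ?thesis
    using hamil_gamma_Suc_diff[of k N n J h] k sum_J_below[OF N J k] sum_J_above[OF N J k]
      sum_coupling_total[OF N k, of Jt] sum_coupling_below[OF N, of Jt k] by simp
qed

lemma hamil_gamma_excess_sum:
  assumes N: "N \<ge> 2" and J: "\<forall>i\<in>{1..n}. J i = Jt / real N ^ i" and k: "k \<le> N ^ n"
    and level: "real n * (real N - 1) * Jt / real N - h = 2 * Jt / real N * T"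
  shows "hamil N n J h (gamma k) = hamil N n J h (gamma 0) + 2 * Jt / real N * excess_sum N T k"
  using k
proof (induction k)
  case (Suc k)
  then show ?case
    using hamil_gamma_Suc[OF N J, of k h] level by (simp add: excess_sum_Suc algebra_simps add_divide_distrib)
qed (simp add: excess_sum_def)

lemma hfield_level:
  assumes "N = 2 * c + 1"
  shows "real n * (real N - 1) * Jt / real N - hfield N n Jt m s
    = 2 * Jt / real N * (real c * real m + (real s - 1) / 2)"
proof -
  have N: "real N > 0" "real N - 1 = 2 * real c" using assms by simp_all
  have "real n * (real N - 1) * Jt / real N - hfield N n Jt m s
      = Jt * ((real N - 1) * real m + real s - 1) / real N"
    unfolding hfield_def using N(1) by (simp add: field_simps)
  also have "\<dots> = 2 * Jt / real N * (real c * real m + (real s - 1) / 2)"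
    unfolding N(2) using N(1) by (simp add: field_simps)
  finally show ?thesis .
qed

lemma hamil_hfield_gamma:
  assumes N: "N = 2 * c + 1" "c \<ge> 1" and J: "\<forall>i\<in>{1..n}. J i = Jt / real N ^ i" and "k \<le> N ^ n"
  shows "hamil N n J (hfield N n Jt m s) (gamma k) = hamil N n J (hfield N n Jt m s) (gamma 0)
    + 2 * Jt / real N * excess_sum N (real c * real m + (real s - 1) / 2) k"
  using hamil_gamma_excess_sum[OF _ J \<open>k \<le> N ^ n\<close> hfield_level[OF N(1)]] N by simp

lemma excess_sum_argmax_odd:
  fixes m :: nat
  assumes N: "N = 2 * c + 1" "c \<ge> 1" and s: "odd s" "s \<le> N"
  defines "T \<equiv> real c * real m + (real s - 1) / 2" and "a \<equiv> s * N ^ m div 2"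
  shows "\<And>k. excess_sum N T k \<le> excess_sum N T a"
    and "\<And>k. k < a \<Longrightarrow> excess_sum N T k < excess_sum N T a"
    and "excess_sum N T (Suc a) = excess_sum N T a"
    and "Suc a \<le> s * N ^ m"
proof -
  obtain t where t: "s = 2 * t + 1" using s(1) oddE by blast
  have mid: "s * N ^ m = 2 * mid_index N c t m + 1" using mid_index_closed_form[OF N(1)] t by simp
  have "a = mid_index N c t m" unfolding a_def mid by simp
  moreover have "T = real c * real m + real t" unfolding T_def t by simp
  moreover have "t \<le> c" using s(2) t N by simp
  ultimately show "\<And>k. excess_sum N T k \<le> excess_sum N T a"
    and "\<And>k. k < a \<Longrightarrow> excess_sum N T k < excess_sum N T a"
    and "excess_sum N T (Suc a) = excess_sum N T a"
    using excess_sum_max_odd[OF N, of t m] by (auto simp: excess_sum_Suc)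
  show "Suc a \<le> s * N ^ m" unfolding a_def mid by simp
qed

lemma excess_sum_argmax_even:
  fixes m :: nat
  assumes N: "N = 2 * c + 1" "c \<ge> 1" and s: "even s" "1 \<le> s" "s \<le> N"
  defines "T \<equiv> real c * real m + (real s - 1) / 2" and "b \<equiv> (s - 1) * N ^ m div 2 + 1"
  shows "\<And>k. excess_sum N T k \<le> excess_sum N T b"
    and "\<And>k. k < b \<Longrightarrow> excess_sum N T k < excess_sum N T b"
    and "b \<le> s * N ^ m"
proof -
  obtain u where u: "s = 2 * u" using s(1) by blast
  define t where "t = u - 1"
  have t: "s = 2 * t + 2" using u s(2) unfolding t_def by simp
  have mid: "(s - 1) * N ^ m = 2 * mid_index N c t m + 1" using mid_index_closed_form[OF N(1)] t by simp
  have "b = Suc (mid_index N c t m)" unfolding b_def mid by simp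
  moreover have "T = real c * real m + real t + 1 / 2" unfolding T_def t by simp
  moreover have "t + 1 \<le> c" using s(3) t N by simp
  ultimately show "\<And>k. excess_sum N T k \<le> excess_sum N T b"
    and "\<And>k. k < b \<Longrightarrow> excess_sum N T k < excess_sum N T b"
    using excess_sum_max_even[OF N, of t m] by auto
  have "(s - 1) * N ^ m \<le> s * N ^ m" by simp
  then show "b \<le> s * N ^ m" unfolding b_def mid by simp
qed

lemma Max_image_affine:
  fixes H g :: "nat \<Rightarrow> real"
  assumes H: "\<forall>k\<le>L. H k = H\<^sub>0 + K * g k" and "K > 0"
    and max: "\<And>k. g k \<le> g p" and "p \<le> L" and "p' \<in> {1..M}" "H p' = H p" and "M \<le> L"
  shows "Max (H ` {1..M}) = H p"
proof (rule Max_eqI)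
  show "H p \<in> H ` {1..M}" using \<open>p' \<in> {1..M}\<close> \<open>H p' = H p\<close> by (metis image_eqI)
next
  fix y assume "y \<in> H ` {1..M}"
  then obtain i where i: "i \<in> {1..M}" "y = H i" by auto
  have "K * g i \<le> K * g p" using \<open>K > 0\<close> max[of i] by simp
  then show "y \<le> H p" using H i \<open>p \<le> L\<close> \<open>M \<le> L\<close> by simp
qed simp

lemma affine_less:
  fixes H g :: "nat \<Rightarrow> real"
  assumes H: "\<forall>k\<le>L. H k = H\<^sub>0 + K * g k" and "K > 0"
    and less: "\<And>k. k < p \<Longrightarrow> g k < g p" and "p \<le> L" and "i < p"
  shows "H i < H p"
proof -
  have "K * g i < K * g p" using \<open>K > 0\<close> less[OF \<open>i < p\<close>] by simp
  then show ?thesis using H \<open>p \<le> L\<close> \<open>i < p\<close> by simp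
qed

theorem proposition4p6:
  fixes N n m s :: nat and Jt :: real and J :: "nat \<Rightarrow> real" and H :: "nat \<Rightarrow> real"
  assumes "N \<ge> 3" and "odd N" and "n \<ge> 1" and "Jt > 0"
    and "\<forall>i\<in>{1..n}. J i = Jt / real N ^ i"
    and "m \<le> n - 1" and "1 \<le> s" and "s \<le> N"
    and H_def: "\<forall>i. H i = hamil N n J (hfield N n Jt m s) (gamma i)"
  shows "(odd s \<longrightarrow>
            (let a = s * N ^ m div 2 in
              H a = H (a + 1) \<and>
              H a = Max (H ` {1..s * N ^ m}) \<and>
              H a = Max (H ` {1..N ^ n}) \<and>
              (\<forall>i<a. H i < H a))) \<and>
         (even s \<longrightarrow>
            (let b = (s - 1) * N ^ m div 2 + 1 in
              H b = Max (H ` {1..s * N ^ m}) \<and>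
              H b = Max (H ` {1..N ^ n}) \<and>
              (\<forall>i<b. H i < H b)))"
proof -
  obtain c where N: "N = 2 * c + 1" using \<open>odd N\<close> oddE by blast
  have c: "c \<ge> 1" using \<open>N \<ge> 3\<close> N by simp
  define T where "T = real c * real m + (real s - 1) / 2"
  define K where "K = 2 * Jt / real N"
  have K: "K > 0" using \<open>Jt > 0\<close> N unfolding K_def by simp
  define H\<^sub>0 where "H\<^sub>0 = H 0" \<comment> \<open>keeps the affine law H below usable as a rewrite rule\<close>
  have H: "\<forall>k\<le>N ^ n. H k = H\<^sub>0 + K * excess_sum N T k"
    unfolding H_def[rule_format] H\<^sub>0_def K_def T_def using hamil_hfield_gamma[OF N c assms(5)] by blast
  have "s * N ^ m \<le> N ^ Suc m" using \<open>s \<le> N\<close> by simp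
  also have "\<dots> \<le> N ^ n" using \<open>m \<le> n - 1\<close> \<open>n \<ge> 1\<close> \<open>N \<ge> 3\<close> by (intro power_increasing) auto
  finally have sN: "s * N ^ m \<le> N ^ n" .
  show ?thesis
  proof (intro conjI impI)
    assume "odd s"
    let ?a = "s * N ^ m div 2"
    note A = excess_sum_argmax_odd[OF N c \<open>odd s\<close> \<open>s \<le> N\<close>, where m=m, folded T_def]
    have flat: "H ?a = H (Suc ?a)" using H A(3,4) sN by simp
    have "Max (H ` {1..M}) = H ?a" if "s * N ^ m \<le> M" "M \<le> N ^ n" for M
      using Max_image_affine[OF H K A(1), of "Suc ?a" M] flat A(4) that by simp
    then show "let a = ?a in H a = H (a + 1) \<and> H a = Max (H ` {1..s * N ^ m})
        \<and> H a = Max (H ` {1..N ^ n}) \<and> (\<forall>i<a. H i < H a)"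
      using flat affine_less[OF H K A(2)] A(4) sN by (simp add: Let_def)
  next
    assume "even s"
    let ?b = "(s - 1) * N ^ m div 2 + 1"
    note B = excess_sum_argmax_even[OF N c \<open>even s\<close> \<open>1 \<le> s\<close> \<open>s \<le> N\<close>, where m=m, folded T_def]
    have "Max (H ` {1..M}) = H ?b" if "s * N ^ m \<le> M" "M \<le> N ^ n" for M
      using Max_image_affine[OF H K B(1), of ?b M] B(3) that by simp
    then show "let b = ?b in H b = Max (H ` {1..s * N ^ m})
        \<and> H b = Max (H ` {1..N ^ n}) \<and> (\<forall>i<b. H i < H b)"
      using affine_less[OF H K B(2)] B(3) sN by (simp add: Let_def)
  qed
qed

end
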